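(* Let $\mathbb F$ have characteristic $0$ and let $f(\mathbf x)\in\mathbb F^k[\mathbf x]$ be an arity-$n$ polynomial of degree $d$ with coefficients in $\mathbb F^k$. Let $\mathbf w\in\mathbb N^n$ be a basis isolating weight assignment for $f$. Then $f(\mathbf x+t^{\mathbf w}):=f(x_1+t^{w_1},\dots,x_n+t^{w_n})$, viewed as a polynomial in $\mathbf x$ with coefficients in $\mathbb F(t)^k$, has a cone-closed basis over $\mathbb F(t)$.
   Context: For $f\in\mathbb F^k[\mathbf x]$, $\mathrm{coef}_{\mathbf x^{\mathbf e}}(f)\in\mathbb F^k$ is the coefficient vector of monomial $\mathbf x^{\mathbf e}$, and $\mathrm{lrsp}(f)$ is the span of all coefficient vectors. A monomial $\mathbf x^{\mathbf e}$ is a submonomial of $\mathbf x^{\mathbf f}$ if $\mathbf e\le\mathbf f$ coordinatewise; a set of monomials is cone-closed if it contains every submonomial of each of its elements. $f$ has a cone-closed basis if there is a cone-closed set $B$ of monomials whose coefficients form a basis of $\mathrm{lrsp}(f)$. A weight assignment $\mathbf w\in\mathbb N^n$ gives monomial $\mathbf x^{\mathbf e}$ weight $\mathbf w(\mathbf e)=\sum_i e_iw_i$. $\mathbf w$ is basis isolating for $f$ if there is a set of monomials $B$ whose coefficients form a basis of $\mathrm{lrsp}(f)$ such that (1) the monomials in $B$ have pairwise distinct weights, and (2) for every monomial $m$ in the support of $f$ not in $B$, $\mathrm{coef}_m(f)$ lies in the span of $\{\mathrm{coef}_{m'}(f): m'\in B,\ \mathbf w(m')<\mathbf w(m)\}$.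 *)

theory Defs
  imports Main "HOL-Library.Function_Algebras" "HOL-Library.Poly_Mapping" "HOL-Computational_Algebra.Polynomial"
    "HOL-Computational_Algebra.Fraction_Field"
begin

text \<open>An arity-n polynomial with coefficients in F^k: variables indexed by a finite
  type 'n (so n = CARD('n)), coefficient vectors are functions 'k \<Rightarrow> F with 'k finite
  (k = CARD('k)). We represent f in F^k[x] componentwise: f j is the scalar polynomial
  (a finitely supported map from exponent vectors to F) giving the j-th coordinate.\<close>

type_synonym ('n, 'b) mpoly = "('n \<Rightarrow>\<^sub>0 nat) \<Rightarrow>\<^sub>0 'b"
type_synonym ('k, 'n, 'b) vpoly = "'k \<Rightarrow> ('n, 'b) mpoly"

definition vscale :: "'b::field \<Rightarrow> ('k \<Rightarrow> 'b) \<Rightarrow> ('k \<Rightarrow> 'b)" where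
  "vscale c v = (\<lambda>j. c * v j)"

definition coefv :: "('k, 'n, 'b::zero) vpoly \<Rightarrow> ('n \<Rightarrow>\<^sub>0 nat) \<Rightarrow> ('k \<Rightarrow> 'b)" where
  "coefv f e = (\<lambda>j. Poly_Mapping.lookup (f j) e)"

definition vsupp :: "('k, 'n, 'b::zero) vpoly \<Rightarrow> ('n \<Rightarrow>\<^sub>0 nat) set" where
  "vsupp f = {e. coefv f e \<noteq> (\<lambda>_. 0)}"

definition lrsp :: "('k, 'n, 'b::field) vpoly \<Rightarrow> ('k \<Rightarrow> 'b) set" where
  "lrsp f = module.span vscale (range (coefv f))"

definition coef_basis :: "('k, 'n, 'b::field) vpoly \<Rightarrow> ('n \<Rightarrow>\<^sub>0 nat) set \<Rightarrow> bool" where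
  "coef_basis f B \<longleftrightarrow> inj_on (coefv f) B \<and> \<not> module.dependent vscale (coefv f ` B)
      \<and> module.span vscale (coefv f ` B) = lrsp f"

definition submonomial :: "('n \<Rightarrow>\<^sub>0 nat) \<Rightarrow> ('n \<Rightarrow>\<^sub>0 nat) \<Rightarrow> bool" where
  "submonomial e m \<longleftrightarrow> (\<forall>i. Poly_Mapping.lookup e i \<le> Poly_Mapping.lookup m i)"

definition cone_closed :: "('n \<Rightarrow>\<^sub>0 nat) set \<Rightarrow> bool" where
  "cone_closed B \<longleftrightarrow> (\<forall>m\<in>B. \<forall>e. submonomial e m \<longrightarrow> e \<in> B)"

definition has_cone_closed_basis :: "('k, 'n, 'b::field) vpoly \<Rightarrow> bool" where
  "has_cone_closed_basis f \<longleftrightarrow> (\<exists>B. cone_closed B \<and> coef_basis f B)"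

definition weight :: "('n::finite \<Rightarrow> nat) \<Rightarrow> ('n \<Rightarrow>\<^sub>0 nat) \<Rightarrow> nat" where
  "weight w e = (\<Sum>i\<in>UNIV. Poly_Mapping.lookup e i * w i)"

definition basis_isolating :: "('n::finite \<Rightarrow> nat) \<Rightarrow> ('k, 'n, 'b::field) vpoly \<Rightarrow> bool" where
  "basis_isolating w f \<longleftrightarrow> (\<exists>B. coef_basis f B \<and> inj_on (weight w) B \<and>
      (\<forall>m \<in> vsupp f - B.
         coefv f m \<in> module.span vscale (coefv f ` {m'\<in>B. weight w m' < weight w m})))"

definition mvar :: "'n \<Rightarrow> ('n, 'b::comm_semiring_1) mpoly" where
  "mvar i = Poly_Mapping.single (Poly_Mapping.single i 1) 1"

definition mconst :: "'b::zero \<Rightarrow> ('n, 'b) mpoly" where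
  "mconst c = Poly_Mapping.single 0 c"

definition t_var :: "'a::field poly fract" where
  "t_var = Fract [:0, 1:] 1"

definition emb :: "'a::field \<Rightarrow> 'a poly fract" where
  "emb c = Fract [:c:] 1"

definition shift_scalar :: "('n::finite \<Rightarrow> nat) \<Rightarrow> ('n, 'a::field) mpoly \<Rightarrow> ('n, 'a poly fract) mpoly" where
  "shift_scalar w p = (\<Sum>m\<in>Poly_Mapping.keys p. mconst (emb (Poly_Mapping.lookup p m)) *
      (\<Prod>i\<in>UNIV. (mvar i + mconst (t_var ^ w i)) ^ Poly_Mapping.lookup m i))"

definition shift_poly :: "('n::finite \<Rightarrow> nat) \<Rightarrow> ('k, 'n, 'a::field) vpoly \<Rightarrow> ('k, 'n, 'a poly fract) vpoly" where
  "shift_poly w f = (\<lambda>j. shift_scalar w (f j))"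

end

theory Submission
  imports Defs "HOL-Computational_Algebra.Polynomial_Factorial" "HOL-Library.Multiset_Order" "HOL-Library.FuncSet"
begin

text \<open>Write \<open>c\<^sub>m\<close> for the coefficient vector of \<open>x\<^sup>m\<close> in \<open>f\<close> and let \<open>B\<close> be an isolating basis.
  The coefficient of \<open>x\<^sup>e\<close> in \<open>f(x + t\<^sup>w)\<close> is \<open>\<Sum>\<^sub>m binom(m, e) t^(w(m) - w(e)) c\<^sub>m\<close>. Expanding
  each \<open>c\<^sub>m\<close> in the basis turns it into \<open>\<Sum>\<^sub>b\<^sub>\<in>\<^sub>B t^(w(b) - w(e)) q\<^sub>e\<^sub>b(t) c\<^sub>b\<close> with polynomials
  \<open>q\<^sub>e\<^sub>b\<close> whose constant term is \<open>binom(b, e)\<close>: every other contribution to \<open>c\<^sub>b\<close> comes from a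
  monomial of larger weight. Comparing lowest powers of \<open>t\<close> in a linear dependency, the shifted
  coefficients indexed by a set \<open>E\<close> are independent over \<open>\<bbbF>(t)\<close> as soon as the binomial rows
  \<open>(binom(b, e))\<^sub>b\<^sub>\<in>\<^sub>B\<close>, \<open>e \<in> E\<close>, are independent over \<open>\<bbbF>\<close>.

  In characteristic 0 such an \<open>E\<close> with \<open>|E| = |B|\<close> can be chosen cone-closed: take the pivots
  of the rows along a term order. Pascal's rule \<open>(e\<^sub>i + 1) row(e + x\<^sub>i) = (b\<^sub>i - e\<^sub>i) row(e)\<close>, the
  factor \<open>b\<^sub>i\<close> acting coordinatewise, shows that multiplying a non-pivot by \<open>x\<^sub>i\<close> gives a
  non-pivot, and there are \<open>|B|\<close> pivots because the rows indexed by \<open>B\<close> itself are unitriangular.\<close>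

section \<open>Linear independence of families of coefficient vectors\<close>

global_interpretation vs: vector_space "vscale :: 'b::field \<Rightarrow> ('c \<Rightarrow> 'b) \<Rightarrow> 'c \<Rightarrow> 'b"
  by unfold_locales (auto simp: vscale_def algebra_simps)

lemma sum_vscale_apply: "(\<Sum>a\<in>A. vscale (u a) (v a)) j = (\<Sum>a\<in>A. u a * v a j)"
  by (induction A rule: infinite_finite_induct) (auto simp: vscale_def)

text \<open>Independence of the indexed family, so a repeated vector is a dependency. Only meaningful for
  finite \<open>A\<close>: a sum over an infinite set is \<open>0\<close>.\<close>
definition linearly_independent_on :: "'x set \<Rightarrow> ('x \<Rightarrow> 'c \<Rightarrow> 'b::comm_semiring_0) \<Rightarrow> bool" where
  "linearly_independent_on A v \<longleftrightarrow> (\<forall>u. (\<forall>j. (\<Sum>a\<in>A. u a * v a j) = 0) \<longrightarrow> (\<forall>a\<in>A. u a = 0))"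

lemma linearly_independent_onD:
  "linearly_independent_on A v \<Longrightarrow> (\<And>j. (\<Sum>a\<in>A. u a * v a j) = 0) \<Longrightarrow> a \<in> A \<Longrightarrow> u a = 0"
  unfolding linearly_independent_on_def by blast

lemma linearly_independent_onI:
  "(\<And>u. (\<And>j. (\<Sum>a\<in>A. u a * v a j) = 0) \<Longrightarrow> (\<And>a. a \<in> A \<Longrightarrow> u a = 0)) \<Longrightarrow> linearly_independent_on A v"
  unfolding linearly_independent_on_def by blast

lemma linearly_independent_on_imp_independent:
  fixes v :: "'x \<Rightarrow> 'c \<Rightarrow> 'b::field"
  assumes "finite A" "linearly_independent_on A v"
  shows "inj_on v A" "\<not> vs.dependent (v ` A)"
proof -
  show inj: "inj_on v A"
  proof (rule inj_onI, rule ccontr)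
    fix a a' assume "a \<in> A" "a' \<in> A" "v a = v a'" "a \<noteq> a'"
    then have "(\<Sum>x\<in>A. (of_bool (x = a) - of_bool (x = a')) * v x j) = 0" for j
      using \<open>finite A\<close> unfolding left_diff_distrib sum_subtractf by simp
    from linearly_independent_onD[OF assms(2) this \<open>a \<in> A\<close>] \<open>a \<noteq> a'\<close> show False by simp
  qed
  show "\<not> vs.dependent (v ` A)"
  proof
    assume "vs.dependent (v ` A)"
    then obtain U a where U: "(\<Sum>y\<in>v ` A. vscale (U y) y) = 0" and "a \<in> A" "U (v a) \<noteq> 0"
      using vs.dependent_finite[of "v ` A"] \<open>finite A\<close> by auto
    have "(\<Sum>x\<in>A. U (v x) * v x j) = 0" for j
      using fun_cong[OF U, of j] by (simp add: sum.reindex[OF inj] sum_vscale_apply)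
    from linearly_independent_onD[OF assms(2) this \<open>a \<in> A\<close>] \<open>U (v a) \<noteq> 0\<close> show False by simp
  qed
qed

lemma independent_imp_linearly_independent_on:
  fixes v :: "'x \<Rightarrow> 'c \<Rightarrow> 'b::field"
  assumes "finite A" "inj_on v A" "\<not> vs.dependent (v ` A)"
  shows "linearly_independent_on A v"
proof (rule linearly_independent_onI)
  fix u a assume zero: "\<And>j. (\<Sum>a\<in>A. u a * v a j) = 0" and "a \<in> A"
  define U where "U y = u (the_inv_into A v y)" for y
  have "(\<Sum>y\<in>v ` A. vscale (U y) y) = (\<Sum>a\<in>A. vscale (u a) (v a))"
    by (simp add: sum.reindex[OF assms(2)] U_def the_inv_into_f_f[OF assms(2)])
  also have "\<dots> = 0"
    using zero by (simp add: fun_eq_iff sum_vscale_apply)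
  finally have "U (v a) = 0"
    using assms(3) vs.dependent_finite[of "v ` A"] \<open>finite A\<close> \<open>a \<in> A\<close> by auto
  then show "u a = 0" by (simp add: U_def the_inv_into_f_f[OF assms(2) \<open>a \<in> A\<close>])
qed

lemma linearly_independent_on_iff:
  fixes v :: "'x \<Rightarrow> 'c \<Rightarrow> 'b::field"
  assumes "finite A"
  shows "linearly_independent_on A v \<longleftrightarrow> inj_on v A \<and> \<not> vs.dependent (v ` A)"
  using assms linearly_independent_on_imp_independent independent_imp_linearly_independent_on by blast

lemma linearly_independent_on_scale_iff:
  fixes v :: "'x \<Rightarrow> 'c \<Rightarrow> 'b::field"
  assumes "\<And>a. a \<in> A \<Longrightarrow> s a \<noteq> 0"
  shows "linearly_independent_on A (\<lambda>a j. s a * v a j) \<longleftrightarrow> linearly_independent_on A v"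
proof
  assume indep: "linearly_independent_on A (\<lambda>a j. s a * v a j)"
  show "linearly_independent_on A v"
  proof (rule linearly_independent_onI)
    fix u a assume zero: "\<And>j. (\<Sum>a\<in>A. u a * v a j) = 0" and "a \<in> A"
    have "(\<Sum>a\<in>A. u a / s a * (s a * v a j)) = (\<Sum>a\<in>A. u a * v a j)" for j
      using assms by (intro sum.cong refl) simp
    then have "(\<Sum>a\<in>A. u a / s a * (s a * v a j)) = 0" for j
      using zero by simp
    from linearly_independent_onD[OF indep this \<open>a \<in> A\<close>] assms[OF \<open>a \<in> A\<close>] show "u a = 0"
      by simp
  qed
next
  assume indep: "linearly_independent_on A v"
  show "linearly_independent_on A (\<lambda>a j. s a * v a j)"
  proof (rule linearly_independent_onI)
    fix u a assume zero: "\<And>j. (\<Sum>a\<in>A. u a * (s a * v a j)) = 0" and "a \<in> A"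
    have "(\<Sum>a\<in>A. (u a * s a) * v a j) = 0" for j
      using zero[of j] by (simp add: mult.assoc)
    from linearly_independent_onD[OF indep this \<open>a \<in> A\<close>] assms[OF \<open>a \<in> A\<close>] show "u a = 0"
      by simp
  qed
qed

lemma linearly_independent_on_combination:
  fixes d :: "'y \<Rightarrow> 'c \<Rightarrow> 'b::comm_semiring_0"
  assumes "linearly_independent_on B d" and "linearly_independent_on E M"
    and "\<And>e b. b \<notin> B \<Longrightarrow> M e b = 0"
    and "\<And>e j. v e j = (\<Sum>b\<in>B. M e b * d b j)"
  shows "linearly_independent_on E v"
proof (rule linearly_independent_onI)
  fix u e assume zero: "\<And>j. (\<Sum>e\<in>E. u e * v e j) = 0" and "e \<in> E"
  have combination: "(\<Sum>b\<in>B. (\<Sum>e\<in>E. u e * M e b) * d b j) = 0" for j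
  proof -
    have "(\<Sum>b\<in>B. (\<Sum>e\<in>E. u e * M e b) * d b j) = (\<Sum>b\<in>B. \<Sum>e\<in>E. u e * (M e b * d b j))"
      by (simp only: sum_distrib_right mult.assoc)
    also have "\<dots> = (\<Sum>e\<in>E. \<Sum>b\<in>B. u e * (M e b * d b j))"
      by (rule sum.swap)
    also have "\<dots> = (\<Sum>e\<in>E. u e * v e j)"
      by (simp only: assms(4) sum_distrib_left)
    finally show ?thesis using zero by simp
  qed
  have "(\<Sum>e\<in>E. u e * M e b) = 0" for b
  proof (cases "b \<in> B")
    case True
    with linearly_independent_onD[OF assms(1) combination] show ?thesis .
  qed (simp add: assms(3))
  from linearly_independent_onD[OF assms(2) this \<open>e \<in> E\<close>] show "u e = 0" .
qed

lemma (in vector_space) span_eq_if_independent_card_eq: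
  assumes "finite S" "independent S" "independent C" "C \<subseteq> span S" "card C = card S"
  shows "span C = span S"
proof
  show "span C \<subseteq> span S"
    using assms(4) by (intro span_minimal subspace_span)
  have "finite C"
    using independent_span_bound[OF assms(1,3,4)] by simp
  have "S \<subseteq> span C"
  proof (rule ccontr)
    assume "\<not> S \<subseteq> span C"
    then obtain x where "x \<in> S" "x \<notin> span C" by blast
    then have "independent (insert x C)" and "insert x C \<subseteq> span S"
      using independent_insertI assms(3,4) span_base by auto
    with independent_span_bound[OF assms(1)] have "card (insert x C) \<le> card S" by blast
    moreover have "x \<notin> C" using \<open>x \<notin> span C\<close> span_base by blast
    ultimately show False using \<open>finite C\<close> assms(5) by simp
  qed
  then show "span S \<subseteq> span C"
    by (intro span_minimal subspace_span)
qed

lemma card_le_if_linearly_independent_supported: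
  fixes v :: "'x \<Rightarrow> 'c \<Rightarrow> 'b::field"
  assumes "finite B" "finite T" "linearly_independent_on T v"
    and supp: "\<And>e j. e \<in> T \<Longrightarrow> j \<notin> B \<Longrightarrow> v e j = 0"
  shows "card T \<le> card B"
proof -
  define unit where "unit b = (\<lambda>j. if j = b then 1 else 0 :: 'b)" for b :: 'c
  have "v e \<in> vs.span (unit ` B)" if "e \<in> T" for e
  proof -
    have "v e = (\<Sum>b\<in>B. vscale (v e b) (unit b))"
      using supp[OF that] \<open>finite B\<close>
      by (auto simp: fun_eq_iff sum_vscale_apply unit_def if_distrib cong: if_cong)
    also have "\<dots> \<in> vs.span (unit ` B)"
      by (intro vs.span_sum vs.span_scale vs.span_base imageI)
    finally show ?thesis .
  qed
  then have "v ` T \<subseteq> vs.span (unit ` B)"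
    by blast
  moreover have "inj_on v T" "\<not> vs.dependent (v ` T)"
    using assms(2,3) by (simp_all add: linearly_independent_on_iff)
  ultimately have "card T \<le> card (unit ` B)"
    using vs.independent_span_bound[of "unit ` B" "v ` T"] \<open>finite B\<close> by (simp add: card_image)
  also have "\<dots> \<le> card B"
    by (rule card_image_le[OF \<open>finite B\<close>])
  finally show ?thesis .
qed

lemma in_span_imageE:
  fixes v :: "'x \<Rightarrow> 'c \<Rightarrow> 'b::field"
  assumes "finite A" "inj_on v A" "x \<in> vs.span (v ` A)"
  obtains a where "\<And>j. x j = (\<Sum>b\<in>A. a b * v b j)" "\<And>b. a b \<noteq> 0 \<Longrightarrow> b \<in> A"
proof -
  obtain u where "x = (\<Sum>y\<in>v ` A. vscale (u y) y)"
    using vs.span_finite[of "v ` A"] assms(1,3) by auto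
  then have "x j = (\<Sum>b\<in>A. (if b \<in> A then u (v b) else 0) * v b j)" for j
    by (simp add: sum_vscale_apply sum.reindex[OF assms(2)])
  then show thesis
    by (rule that) (simp split: if_splits)
qed

lemma in_span_if_scaled_combination:
  fixes d :: "'y \<Rightarrow> 'c \<Rightarrow> 'b::field"
  assumes "s \<noteq> 0" "\<And>j. s * x j = (\<Sum>b\<in>B. c b * d b j)"
  shows "x \<in> vs.span (d ` B)"
proof -
  have "x = (\<Sum>b\<in>B. vscale (c b / s) (d b))"
  proof
    fix j
    have "x j = s * x j / s"
      using assms(1) by simp
    also have "\<dots> = (\<Sum>b\<in>B. c b / s * d b j)"
      unfolding assms(2) sum_divide_distrib by (intro sum.cong refl) simp
    finally show "x j = (\<Sum>b\<in>B. vscale (c b / s) (d b)) j"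
      by (simp only: sum_vscale_apply)
  qed
  also have "\<dots> \<in> vs.span (d ` B)"
    by (intro vs.span_sum vs.span_scale vs.span_base imageI)
  finally show ?thesis .
qed

text \<open>The greedy basis of the span of \<open>range v\<close>, scanning the indices in the order given by \<open>r\<close>.\<close>
definition pivots :: "('x \<Rightarrow> 'o::ord) \<Rightarrow> ('x \<Rightarrow> 'c \<Rightarrow> 'b::field) \<Rightarrow> 'x set" where
  "pivots r v = {e. v e \<notin> vs.span (v ` {h. r h < r e})}"

lemma in_span_pivots:
  fixes r :: "'x \<Rightarrow> 'o::wellorder"
  shows "v h \<in> vs.span (v ` pivots r v)"
proof (induction "r h" arbitrary: h rule: less_induct)
  case less
  show ?case
  proof (cases "h \<in> pivots r v")
    case False
    then have "v h \<in> vs.span (v ` {h'. r h' < r h})"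
      by (simp add: pivots_def)
    also have "\<dots> \<subseteq> vs.span (v ` pivots r v)"
      using less by (intro vs.span_minimal vs.subspace_span) auto
    finally show ?thesis .
  qed (simp add: vs.span_base)
qed

lemma linearly_independent_on_pivots:
  fixes r :: "'x \<Rightarrow> 'o::linorder"
  assumes "inj r" "finite T" "T \<subseteq> pivots r v"
  shows "linearly_independent_on T v"
proof -
  have "inj_on v T \<and> \<not> vs.dependent (v ` T)"
    using assms(2,3)
  proof (induction T rule: finite_ranking_induct[where f = r])
    case (insert x S)
    show ?case
    proof (cases "x \<in> S")
      case False
      with insert.hyps(2) \<open>inj r\<close> have "S \<subseteq> {h. r h < r x}"
        by (auto simp: order.order_iff_strict dest: injD)
      then have "vs.span (v ` S) \<subseteq> vs.span (v ` {h. r h < r x})"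
        by (intro vs.span_mono image_mono)
      moreover have "v x \<notin> vs.span (v ` {h. r h < r x})"
        using insert.prems by (simp add: pivots_def)
      ultimately have "v x \<notin> vs.span (v ` S)" by blast
      moreover from this have "v x \<notin> v ` S"
        using vs.span_base by blast
      ultimately show ?thesis
        using insert vs.independent_insertI by auto
    qed (use insert in \<open>simp add: insert_absorb\<close>)
  qed (simp add: vs.independent_empty)
  with assms(2) show ?thesis
    by (simp add: linearly_independent_on_iff)
qed

section \<open>Independence over the rational function field\<close>

lemma linearly_independent_on_poly_if_constant_terms:
  fixes Q :: "'x \<Rightarrow> 'c \<Rightarrow> 'a::comm_semiring_0 poly"
  assumes "linearly_independent_on E (\<lambda>e j. coeff (Q e j) 0)"
  shows "linearly_independent_on E Q"
proof (rule linearly_independent_onI, rule ccontr)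
  fix u e assume zero: "\<And>j. (\<Sum>e\<in>E. u e * Q e j) = 0" and "e \<in> E" "u e \<noteq> 0"
  then obtain n where "coeff (u e) n \<noteq> 0"
    by (metis leading_coeff_0_iff)
  define n0 where "n0 = (LEAST n. \<exists>e\<in>E. coeff (u e) n \<noteq> 0)"
  have n0_ex: "\<exists>e\<in>E. coeff (u e) n0 \<noteq> 0"
    unfolding n0_def by (rule LeastI_ex) (use \<open>e \<in> E\<close> \<open>coeff (u e) n \<noteq> 0\<close> in blast)
  have below_n0: "coeff (u e) i = 0" if "e \<in> E" "i < n0" for e i
    using not_less_Least[of i "\<lambda>n. \<exists>e\<in>E. coeff (u e) n \<noteq> 0"] that by (auto simp: n0_def)
  \<comment> \<open>the lowest order term of \<open>\<Sum> u e * Q e j\<close> only sees the constant terms of \<open>Q\<close>\<close>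
  have "coeff (u e * Q e j) n0 = coeff (u e) n0 * coeff (Q e j) 0" if "e \<in> E" for e j
  proof -
    have "{..n0} = insert n0 {..<n0}"
      by auto
    then have "coeff (u e * Q e j) n0 = (\<Sum>i\<in>insert n0 {..<n0}. coeff (u e) i * coeff (Q e j) (n0 - i))"
      by (simp only: coeff_mult)
    also have "\<dots> = coeff (u e) n0 * coeff (Q e j) 0"
      using below_n0[OF that] by simp
    finally show ?thesis .
  qed
  then have "(\<Sum>e\<in>E. coeff (u e) n0 * coeff (Q e j) 0) = coeff (\<Sum>e\<in>E. u e * Q e j) n0" for j
    by (simp add: coeff_sum)
  then have "(\<Sum>e\<in>E. coeff (u e) n0 * coeff (Q e j) 0) = 0" for j
    by (simp add: zero)
  then have "coeff (u e) n0 = 0" if "e \<in> E" for e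
    using linearly_independent_onD[OF assms, of "\<lambda>e. coeff (u e) n0"] that by blast
  with n0_ex show False by blast
qed

lemma common_denominator:
  fixes u :: "'x \<Rightarrow> 'a::idom fract"
  assumes "finite E"
  obtains D p where "D \<noteq> 0" "\<And>e. e \<in> E \<Longrightarrow> to_fract D * u e = to_fract (p e)"
proof -
  have "\<exists>n d. to_fract d * u e = to_fract n \<and> d \<noteq> 0" for e
  proof (cases "u e")
    case (Fract a b)
    then have "to_fract b * u e = to_fract a \<and> b \<noteq> 0"
      by (simp add: Fract_conv_to_fract)
    then show ?thesis by blast
  qed
  then obtain n d where nd: "\<And>e. to_fract (d e) * u e = to_fract (n e)" "\<And>e. d e \<noteq> 0"
    by metis
  show thesis
  proof (rule that)
    show "(\<Prod>e\<in>E. d e) \<noteq> 0"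
      using nd(2) assms by simp
    show "to_fract (\<Prod>e\<in>E. d e) * u e = to_fract ((\<Prod>e'\<in>E - {e}. d e') * n e)" if "e \<in> E" for e
    proof -
      have "to_fract (\<Prod>e\<in>E. d e) * u e = to_fract (\<Prod>e'\<in>E - {e}. d e') * (to_fract (d e) * u e)"
        unfolding prod.remove[OF assms that] to_fract_mult by (simp only: mult_ac)
      then show ?thesis
        by (simp only: nd to_fract_mult)
    qed
  qed
qed

lemma linearly_independent_on_to_fract:
  fixes Q :: "'x \<Rightarrow> 'c \<Rightarrow> 'a::idom"
  assumes "finite E" and "linearly_independent_on E Q"
  shows "linearly_independent_on E (\<lambda>e j. to_fract (Q e j))"
proof (rule linearly_independent_onI)
  fix u e assume zero: "\<And>j. (\<Sum>e\<in>E. u e * to_fract (Q e j)) = 0" and "e \<in> E"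
  obtain D p where "D \<noteq> 0" and p: "\<And>e. e \<in> E \<Longrightarrow> to_fract D * u e = to_fract (p e)"
    by (rule common_denominator[OF assms(1), of u]) auto
  have "to_fract (\<Sum>e\<in>E. p e * Q e j) = to_fract D * (\<Sum>e\<in>E. u e * to_fract (Q e j))" for j
  proof -
    have "to_fract (\<Sum>e\<in>E. p e * Q e j) = (\<Sum>e\<in>E. (to_fract D * u e) * to_fract (Q e j))"
      unfolding to_fract_sum to_fract_mult by (intro sum.cong refl) (simp only: p)
    then show ?thesis
      by (simp only: sum_distrib_left mult.assoc)
  qed
  then have "to_fract (\<Sum>e\<in>E. p e * Q e j) = 0" for j
    using zero by (simp only: mult_zero_right)
  then have "(\<Sum>e\<in>E. p e * Q e j) = 0" for j
    by (simp only: to_fract_eq_0_iff)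
  from linearly_independent_onD[OF assms(2) this \<open>e \<in> E\<close>] have "p e = 0" .
  with p[OF \<open>e \<in> E\<close>] \<open>D \<noteq> 0\<close> show "u e = 0" by simp
qed

lemma emb_eq_to_fract: "emb c = to_fract [:c:]"
  by (simp add: emb_def to_fract_def)

lemma t_var_eq_to_fract: "t_var = to_fract [:0, 1:]"
  by (simp add: t_var_def to_fract_def)

lemma t_var_nonzero: "t_var \<noteq> 0"
  by (simp add: t_var_eq_to_fract)

lemma to_fract_power: "to_fract (x ^ n) = to_fract x ^ n"
  by (induction n) simp_all

lemma to_fract_monom: "to_fract (monom c n) = emb c * t_var ^ n"
proof -
  have "monom c n = [:c:] * [:0, 1:] ^ n"
    by (simp add: monom_altdef)
  then show ?thesis
    by (simp only: to_fract_mult to_fract_power emb_eq_to_fract t_var_eq_to_fract)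
qed

lemma emb_0 [simp]: "emb 0 = 0"
  by (simp add: emb_eq_to_fract)

lemma emb_mult: "emb (a * b) = emb a * emb b"
  by (simp add: emb_eq_to_fract flip: to_fract_mult)

lemma emb_add: "emb (a + b) = emb a + emb b"
  by (simp add: emb_eq_to_fract flip: to_fract_add)

lemma emb_sum: "emb (\<Sum>x\<in>A. f x) = (\<Sum>x\<in>A. emb (f x))"
  by (induction A rule: infinite_finite_induct) (simp_all add: emb_add)

lemma emb_of_nat: "emb (of_nat n) = of_nat n"
proof (induction n)
  case (Suc n)
  have "emb 1 = 1"
    by (simp add: emb_eq_to_fract flip: one_pCons)
  with Suc show ?case
    by (simp add: emb_add)
qed simp

lemma linearly_independent_on_emb:
  fixes v :: "'x \<Rightarrow> 'c \<Rightarrow> 'a::field"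
  assumes "finite A" "linearly_independent_on A v"
  shows "linearly_independent_on A (\<lambda>a j. emb (v a j))"
proof -
  have "linearly_independent_on A (\<lambda>a j. [:v a j:])"
    by (rule linearly_independent_on_poly_if_constant_terms) (simp add: assms(2))
  from linearly_independent_on_to_fract[OF assms(1) this] show ?thesis
    by (simp add: emb_eq_to_fract)
qed

section \<open>Monomials and their binomial coefficients\<close>

lemma submonomial_iff_add: "submonomial e m \<longleftrightarrow> (\<exists>g. m = e + g)"
proof
  assume "submonomial e m"
  then have "m = e + (m - e)"
    by (intro poly_mapping_eqI) (simp add: submonomial_def lookup_add lookup_minus)
  then show "\<exists>g. m = e + g" ..
qed (auto simp: submonomial_def lookup_add)

definition var_index :: "'n::finite \<Rightarrow> nat" where
  "var_index = (SOME f. inj f)"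

lemma inj_var_index: "inj (var_index :: 'n::finite \<Rightarrow> nat)"
proof -
  have "\<exists>f :: 'n \<Rightarrow> nat. inj f"
    using finite_imp_inj_to_nat_seg[of "UNIV :: 'n set"] by auto
  then show ?thesis
    unfolding var_index_def by (rule someI_ex)
qed

text \<open>Monomials are compared through the multisets of their variables, numbered arbitrarily by
  \<open>var_index\<close>; the multiset order is then a well-order compatible with multiplication.\<close>
definition monomial_mset :: "('n::finite \<Rightarrow>\<^sub>0 nat) \<Rightarrow> nat multiset" where
  "monomial_mset e = (\<Sum>i\<in>UNIV. replicate_mset (Poly_Mapping.lookup e i) (var_index i))"

lemma count_monomial_mset_var_index: "count (monomial_mset e) (var_index i) = Poly_Mapping.lookup e i"
proof -
  have "count (monomial_mset e) (var_index i) = (\<Sum>j\<in>UNIV. if j = i then Poly_Mapping.lookup e j else 0)"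
    unfolding monomial_mset_def count_sum by (intro sum.cong) (auto simp: inj_eq[OF inj_var_index])
  then show ?thesis by simp
qed

lemma inj_monomial_mset: "inj monomial_mset"
  by (rule injI, rule poly_mapping_eqI) (metis count_monomial_mset_var_index)

lemma replicate_mset_add: "replicate_mset (a + b) x = replicate_mset a x + replicate_mset b x"
  by (induction a) auto

lemma monomial_mset_add: "monomial_mset (e + g) = monomial_mset e + monomial_mset g"
  by (simp add: monomial_mset_def lookup_add replicate_mset_add sum.distrib)

lemma monomial_mset_less_add:
  assumes "g \<noteq> 0"
  shows "monomial_mset e < monomial_mset (e + g)"
proof -
  have "monomial_mset 0 = {#}"
    by (simp add: monomial_mset_def)
  with assms inj_monomial_mset have "monomial_mset g \<noteq> {#}"
    by (metis injD)
  then show ?thesis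
    unfolding monomial_mset_add by (rule le_multiset_plus_right_nonempty)
qed

lemma monomial_mset_less_if_submonomial:
  "submonomial e m \<Longrightarrow> e \<noteq> m \<Longrightarrow> monomial_mset e < monomial_mset m"
  by (auto simp: submonomial_iff_add intro: monomial_mset_less_add)

definition monomial_choose :: "('n::finite \<Rightarrow>\<^sub>0 nat) \<Rightarrow> ('n \<Rightarrow>\<^sub>0 nat) \<Rightarrow> nat" where
  "monomial_choose m e = (\<Prod>i\<in>UNIV. Poly_Mapping.lookup m i choose Poly_Mapping.lookup e i)"

lemma monomial_choose_self [simp]: "monomial_choose m m = 1"
  by (simp add: monomial_choose_def)

lemma monomial_choose_eq_0_iff: "monomial_choose m e = 0 \<longleftrightarrow> \<not> submonomial e m"
  by (simp add: monomial_choose_def submonomial_def binomial_eq_0_iff not_le)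

lemma monomial_choose_add_single:
  fixes m e :: "'n::finite \<Rightarrow>\<^sub>0 nat"
  shows "(of_nat (Suc (Poly_Mapping.lookup e i)) * of_nat (monomial_choose m (e + Poly_Mapping.single i 1)) :: 'a::comm_ring_1)
    = (of_nat (Poly_Mapping.lookup m i) - of_nat (Poly_Mapping.lookup e i)) * of_nat (monomial_choose m e)"
proof -
  let ?rest = "\<Prod>j\<in>UNIV - {i}. Poly_Mapping.lookup m j choose Poly_Mapping.lookup e j"
  have "monomial_choose m (e + Poly_Mapping.single i 1) = (Poly_Mapping.lookup m i choose Suc (Poly_Mapping.lookup e i)) * ?rest"
    unfolding monomial_choose_def prod.remove[OF finite_UNIV UNIV_I, of _ i]
    by (simp add: lookup_add lookup_single)
  moreover have "monomial_choose m e = (Poly_Mapping.lookup m i choose Poly_Mapping.lookup e i) * ?rest"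
    unfolding monomial_choose_def by (rule prod.remove) simp_all
  moreover have "(of_nat (Suc k) * of_nat (n choose Suc k) :: 'a) = (of_nat n - of_nat k) * of_nat (n choose k)"
    for n k
  proof (cases "k \<le> n")
    case True
    have "Suc k * (n choose Suc k) = (n - k) * (n choose k)"
      by (simp only: binomial_absorption binomial_absorb_comp)
    from arg_cong[OF this, of "of_nat :: nat \<Rightarrow> 'a"] True show ?thesis
      by (simp add: of_nat_diff distrib_right)
  qed (simp add: binomial_eq_0)
  ultimately show ?thesis
    by (simp add: mult.assoc[symmetric])
qed

section \<open>A cone-closed set of independent binomial rows\<close>

text \<open>\<open>choose_row B e m\<close> is the coefficient of \<open>x\<^sup>e\<close> in \<open>(x + 1)\<^sup>m\<close>, for \<open>m \<in> B\<close>.\<close>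
definition choose_row :: "('n::finite \<Rightarrow>\<^sub>0 nat) set \<Rightarrow> ('n \<Rightarrow>\<^sub>0 nat) \<Rightarrow> ('n \<Rightarrow>\<^sub>0 nat) \<Rightarrow> 'a::semiring_1" where
  "choose_row B e = (\<lambda>m. if m \<in> B then of_nat (monomial_choose m e) else 0)"

definition exponent_scale :: "'n \<Rightarrow> (('n \<Rightarrow>\<^sub>0 nat) \<Rightarrow> 'a::semiring_1) \<Rightarrow> ('n \<Rightarrow>\<^sub>0 nat) \<Rightarrow> 'a" where
  "exponent_scale i g = (\<lambda>m. of_nat (Poly_Mapping.lookup m i) * g m)"

lemma module_hom_exponent_scale:
  "module_hom vscale vscale (exponent_scale i :: _ \<Rightarrow> _ \<Rightarrow> 'a::field)"
  by (auto simp: module_hom_iff vs.module_axioms exponent_scale_def vscale_def algebra_simps)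

lemma exponent_scale_choose_row:
  "exponent_scale i (choose_row B e) =
    vscale (of_nat (Suc (Poly_Mapping.lookup e i))) (choose_row B (e + Poly_Mapping.single i 1))
    + vscale (of_nat (Poly_Mapping.lookup e i)) (choose_row B e :: _ \<Rightarrow> 'a::field)"
  using monomial_choose_add_single[where 'a = 'a, of e i]
  by (auto simp: fun_eq_iff exponent_scale_def choose_row_def vscale_def algebra_simps)

lemma choose_row_add_single:
  "choose_row B (e + Poly_Mapping.single i 1) =
    vscale (inverse (of_nat (Suc (Poly_Mapping.lookup e i))))
      (exponent_scale i (choose_row B e) - vscale (of_nat (Poly_Mapping.lookup e i)) (choose_row B e)
        :: _ \<Rightarrow> 'a::field_char_0)"
proof -
  have "1 + of_nat (Poly_Mapping.lookup e i) \<noteq> (0 :: 'a)"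
    using of_nat_neq_0[of "Poly_Mapping.lookup e i", where 'a = 'a] by simp
  then show ?thesis
    unfolding exponent_scale_choose_row by (simp add: fun_eq_iff vscale_def field_simps)
qed

lemma not_in_pivots_choose_row_add_single:
  fixes B :: "('n::finite \<Rightarrow>\<^sub>0 nat) set"
  assumes "e \<notin> pivots monomial_mset (choose_row B :: _ \<Rightarrow> _ \<Rightarrow> 'a::field_char_0)"
  shows "e + Poly_Mapping.single i 1 \<notin> pivots monomial_mset (choose_row B :: _ \<Rightarrow> _ \<Rightarrow> 'a)"
proof -
  let ?row = "choose_row B :: _ \<Rightarrow> _ \<Rightarrow> 'a" and ?e' = "e + Poly_Mapping.single i 1"
  let ?below = "\<lambda>e. ?row ` {h. monomial_mset h < monomial_mset e}"
  have e_e': "monomial_mset e < monomial_mset ?e'"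
    by (rule monomial_mset_less_add) (metis lookup_single_eq lookup_zero zero_neq_one)
  have shift_below: "monomial_mset (h + Poly_Mapping.single i 1) < monomial_mset ?e'"
    if "monomial_mset h < monomial_mset e" for h
    using that by (simp add: monomial_mset_add)
  \<comment> \<open>the linear map \<open>exponent_scale i\<close> sends each row into the span of the row and its \<open>x\<^sub>i\<close>-shift\<close>
  have "?row e \<in> vs.span (?below e)"
    using assms by (simp add: pivots_def)
  then have "exponent_scale i (?row e) \<in> vs.span (exponent_scale i ` ?below e)"
    using module_hom.spans_image[OF module_hom_exponent_scale, of "{?row e}" "?below e"] by simp
  also have "\<dots> \<subseteq> vs.span (?below ?e')"
  proof (intro vs.span_minimal vs.subspace_span image_subsetI)
    fix x assume "x \<in> ?below e"
    then obtain h where h: "monomial_mset h < monomial_mset e" and x: "x = ?row h"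
      by blast
    have "monomial_mset h < monomial_mset ?e'"
      using h e_e' by (rule less_trans)
    with shift_below[OF h] show "exponent_scale i x \<in> vs.span (?below ?e')"
      unfolding x exponent_scale_choose_row by (intro vs.span_add vs.span_scale vs.span_base) auto
  qed
  finally have "exponent_scale i (?row e) \<in> vs.span (?below ?e')" .
  moreover have "?row e \<in> vs.span (?below ?e')"
    using e_e' by (intro vs.span_base) auto
  ultimately have "?row ?e' \<in> vs.span (?below ?e')"
    unfolding choose_row_add_single by (intro vs.span_scale vs.span_diff)
  then show ?thesis
    by (simp add: pivots_def)
qed

lemma cone_closed_pivots_choose_row:
  "cone_closed (pivots monomial_mset (choose_row B :: _ \<Rightarrow> _ \<Rightarrow> 'a::field_char_0))"
proof -
  let ?P = "pivots monomial_mset (choose_row B :: _ \<Rightarrow> _ \<Rightarrow> 'a)"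
  have "e + g \<notin> ?P" if "e \<notin> ?P" for e g
  proof (induction "monomial_mset g" arbitrary: g rule: less_induct)
    case less
    show ?case
    proof (cases "g = 0")
      case False
      then obtain i where "Poly_Mapping.lookup g i \<noteq> 0"
        by (metis lookup_zero poly_mapping_eqI)
      define g' where "g' = g - Poly_Mapping.single i 1"
      have g: "g = g' + Poly_Mapping.single i 1"
        using \<open>Poly_Mapping.lookup g i \<noteq> 0\<close>
        by (intro poly_mapping_eqI) (auto simp: g'_def lookup_add lookup_minus lookup_single when_def)
      have "monomial_mset g' < monomial_mset g"
        unfolding g by (rule monomial_mset_less_add) (metis lookup_single_eq lookup_zero zero_neq_one)
      then have "e + g' \<notin> ?P"
        by (rule less)
      then show ?thesis
        unfolding g add.assoc[symmetric] by (rule not_in_pivots_choose_row_add_single)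
    qed (simp add: that)
  qed
  then show ?thesis
    unfolding cone_closed_def submonomial_iff_add by blast
qed

lemma linearly_independent_on_choose_row:
  assumes "finite B"
  shows "linearly_independent_on B (choose_row B :: _ \<Rightarrow> _ \<Rightarrow> 'a::field_char_0)"
proof (rule linearly_independent_onI, rule ccontr)
  fix u e assume zero: "\<And>m. (\<Sum>e\<in>B. u e * choose_row B e m) = (0 :: 'a)" and "e \<in> B" "u e \<noteq> 0"
  define S where "S = {e\<in>B. u e \<noteq> 0}"
  define e0 where "e0 = arg_min_on monomial_mset S"
  have "finite S" "S \<noteq> {}"
    using \<open>finite B\<close> \<open>e \<in> B\<close> \<open>u e \<noteq> 0\<close> by (auto simp: S_def)
  then have "e0 \<in> S" and minimal: "\<not> (\<exists>e\<in>S. monomial_mset e < monomial_mset e0)"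
    unfolding e0_def by (rule arg_min_if_finite)+
  then have "e0 \<in> B" "u e0 \<noteq> 0"
    by (simp_all add: S_def)
  \<comment> \<open>coordinate \<open>e0\<close> only sees submonomials of \<open>e0\<close>, and these precede \<open>e0\<close>\<close>
  have "u e * choose_row B e e0 = 0" if "e \<in> B - {e0}" for e
  proof (cases "u e = 0 \<or> monomial_choose e0 e = 0")
    case False
    then have "monomial_mset e < monomial_mset e0"
      using that by (intro monomial_mset_less_if_submonomial) (auto simp: monomial_choose_eq_0_iff)
    with minimal that False show ?thesis
      by (auto simp: S_def)
  qed (auto simp: choose_row_def)
  then have "(\<Sum>e\<in>B. u e * choose_row B e e0) = u e0 * choose_row B e0 e0"
    unfolding sum.remove[OF \<open>finite B\<close> \<open>e0 \<in> B\<close>] by (simp add: sum.neutral)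
  with zero[of e0] \<open>e0 \<in> B\<close> \<open>u e0 \<noteq> 0\<close> show False
    by (simp add: choose_row_def)
qed

lemma cone_closed_choose_row_basis:
  fixes B :: "('n::finite \<Rightarrow>\<^sub>0 nat) set"
  assumes "finite B"
  obtains E where "cone_closed E" "finite E" "card E = card B"
    "linearly_independent_on E (choose_row B :: _ \<Rightarrow> _ \<Rightarrow> 'a::field_char_0)"
proof -
  let ?row = "choose_row B :: _ \<Rightarrow> _ \<Rightarrow> 'a"
  let ?E = "pivots monomial_mset ?row"
  have bound: "card T \<le> card B" if "finite T" "T \<subseteq> ?E" for T
    using assms that linearly_independent_on_pivots[OF inj_monomial_mset that]
    by (intro card_le_if_linearly_independent_supported[where v = ?row]) (auto simp: choose_row_def)
  have "finite ?E"
    using infinite_arbitrarily_large[of ?E "Suc (card B)"] bound by fastforce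
  then have indep_E: "linearly_independent_on ?E ?row"
    by (intro linearly_independent_on_pivots[OF inj_monomial_mset]) auto
  have "card B \<le> card ?E"
  proof -
    have "?row ` B \<subseteq> vs.span (?row ` ?E)"
      using in_span_pivots[of ?row _ monomial_mset] by blast
    moreover have "inj_on ?row B" "\<not> vs.dependent (?row ` B)"
      using linearly_independent_on_choose_row[OF assms, where 'a = 'a] assms
      by (simp_all add: linearly_independent_on_iff)
    ultimately have "card (?row ` B) \<le> card (?row ` ?E)"
      using vs.independent_span_bound \<open>finite ?E\<close> by blast
    also have "\<dots> \<le> card ?E"
      using \<open>finite ?E\<close> by (rule card_image_le)
    finally show ?thesis
      using \<open>inj_on ?row B\<close> by (simp add: card_image)
  qed
  with bound[OF \<open>finite ?E\<close>] have "card ?E = card B"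
    by simp
  from cone_closed_pivots_choose_row[of B, where 'a = 'a] \<open>finite ?E\<close> this indep_E show thesis
    by (rule that)
qed

section \<open>Coefficients of the shifted polynomial\<close>

lemma mvar_power: "mvar i ^ k = Poly_Mapping.single (Poly_Mapping.single i k) (1 :: 'b::comm_semiring_1)"
  by (induction k) (simp_all add: mvar_def mult_single single_add[symmetric] add.commute)

lemma mconst_power: "mconst c ^ k = (mconst (c ^ k) :: ('n, 'b::comm_semiring_1) mpoly)"
  by (induction k) (simp_all add: mconst_def mult_single)

lemma mvar_plus_mconst_power:
  "(mvar i + mconst c) ^ a = (\<Sum>k\<le>a. Poly_Mapping.single (Poly_Mapping.single i k)
      (of_nat (a choose k) * c ^ (a - k)) :: ('n, 'b::comm_semiring_1) mpoly)"
  unfolding binomial_ring mvar_power mconst_power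
  by (intro sum.cong refl) (simp only: single_of_nat[symmetric] mconst_def mult_single, simp)

lemma prod_single:
  "finite A \<Longrightarrow> (\<Prod>i\<in>A. Poly_Mapping.single (s i) (d i)) =
    (Poly_Mapping.single (\<Sum>i\<in>A. s i) (\<Prod>i\<in>A. d i) :: ('x::comm_monoid_add, 'b::comm_semiring_1) poly_mapping)"
  by (induction A rule: finite_induct) (simp_all add: mult_single)

lemma lookup_prod_mvar_plus_mconst_power:
  fixes c :: "'n::finite \<Rightarrow> 'b::comm_semiring_1"
  shows "Poly_Mapping.lookup (\<Prod>i\<in>UNIV. (mvar i + mconst (c i)) ^ m i) e =
    (\<Prod>i\<in>UNIV. of_nat (m i choose Poly_Mapping.lookup e i) * c i ^ (m i - Poly_Mapping.lookup e i))"
proof -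
  let ?d = "\<lambda>i k. of_nat (m i choose k) * c i ^ (m i - k)"
  let ?mono = "\<lambda>g. \<Sum>i\<in>UNIV. Poly_Mapping.single i (g i)"
  have "(\<Prod>i\<in>UNIV. (mvar i + mconst (c i)) ^ m i) =
      (\<Sum>g\<in>PiE UNIV (\<lambda>i. {..m i}). Poly_Mapping.single (?mono g) (\<Prod>i\<in>UNIV. ?d i (g i)))"
    unfolding mvar_plus_mconst_power prod_sum_PiE[OF finite_UNIV finite_atMost] by (simp add: prod_single)
  moreover have "?mono g = e \<longleftrightarrow> g = Poly_Mapping.lookup e" for g
    by (auto simp: poly_mapping_eq_iff lookup_sum lookup_single when_def fun_eq_iff)
  ultimately have "Poly_Mapping.lookup (\<Prod>i\<in>UNIV. (mvar i + mconst (c i)) ^ m i) e =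
      (\<Sum>g\<in>PiE UNIV (\<lambda>i. {..m i}). if g = Poly_Mapping.lookup e then \<Prod>i\<in>UNIV. ?d i (g i) else 0)"
    by (simp add: lookup_sum lookup_single when_def)
  also have "\<dots> = (if Poly_Mapping.lookup e \<in> PiE UNIV (\<lambda>i. {..m i})
      then \<Prod>i\<in>UNIV. ?d i (Poly_Mapping.lookup e i) else 0)"
    by (rule sum.delta) (simp add: finite_PiE)
  also have "\<dots> = (\<Prod>i\<in>UNIV. ?d i (Poly_Mapping.lookup e i))"
  proof (cases "Poly_Mapping.lookup e \<in> PiE UNIV (\<lambda>i. {..m i})")
    case False
    then obtain i where "m i < Poly_Mapping.lookup e i"
      by (auto simp: PiE_def Pi_def not_le)
    then have "?d i (Poly_Mapping.lookup e i) = 0"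
      by (simp add: binomial_eq_0)
    with False show ?thesis
      by (metis (no_types, lifting) UNIV_I finite_UNIV prod_zero)
  qed simp
  finally show ?thesis .
qed

lemma lookup_mconst_mult: "Poly_Mapping.lookup (mconst c * q) e = c * Poly_Mapping.lookup q e"
  unfolding mconst_def mult_map_scale_conv_mult[symmetric] by (simp add: map.rep_eq when_def)

lemma weight_add_diff:
  assumes "submonomial e m"
  shows "weight w e + (\<Sum>i\<in>UNIV. w i * (Poly_Mapping.lookup m i - Poly_Mapping.lookup e i)) = weight w m"
proof -
  have "Poly_Mapping.lookup e i * w i + w i * (Poly_Mapping.lookup m i - Poly_Mapping.lookup e i)
      = Poly_Mapping.lookup m i * w i" for i
  proof -
    have "Poly_Mapping.lookup e i \<le> Poly_Mapping.lookup m i"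
      using assms by (simp add: submonomial_def)
    then obtain d where "Poly_Mapping.lookup m i = Poly_Mapping.lookup e i + d"
      using le_iff_add by blast
    then show ?thesis
      by (simp add: algebra_simps)
  qed
  then show ?thesis
    unfolding weight_def sum.distrib[symmetric] by simp
qed

lemma t_var_power_lookup_shifted_monomial:
  "t_var ^ weight w e * Poly_Mapping.lookup (\<Prod>i\<in>UNIV. (mvar i + mconst (t_var ^ w i)) ^ Poly_Mapping.lookup m i) e
    = of_nat (monomial_choose m e) * (t_var :: 'a::field poly fract) ^ weight w m"
proof -
  have lookup_eq: "Poly_Mapping.lookup (\<Prod>i\<in>UNIV. (mvar i + mconst (t_var ^ w i)) ^ Poly_Mapping.lookup m i) e
      = of_nat (monomial_choose m e) * (t_var :: 'a poly fract) ^ (\<Sum>i\<in>UNIV. w i * (Poly_Mapping.lookup m i - Poly_Mapping.lookup e i))"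
    by (simp add: lookup_prod_mvar_plus_mconst_power prod.distrib monomial_choose_def power_sum power_mult)
  show ?thesis
  proof (cases "submonomial e m")
    case True
    have "t_var ^ weight w e * Poly_Mapping.lookup (\<Prod>i\<in>UNIV. (mvar i + mconst (t_var ^ w i)) ^ Poly_Mapping.lookup m i) e
        = of_nat (monomial_choose m e) * (t_var :: 'a poly fract) ^ (weight w e + (\<Sum>i\<in>UNIV. w i * (Poly_Mapping.lookup m i - Poly_Mapping.lookup e i)))"
      by (simp only: lookup_eq power_add mult_ac)
    then show ?thesis
      by (simp only: weight_add_diff[OF True])
  next
    case False
    then have "monomial_choose m e = 0"
      by (simp add: monomial_choose_eq_0_iff)
    then show ?thesis
      by (simp add: lookup_eq)
  qed
qed

lemma t_var_power_lookup_shift_scalar: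
  fixes p :: "('n::finite, 'a::field) mpoly"
  shows "t_var ^ weight w e * Poly_Mapping.lookup (shift_scalar w p) e =
    (\<Sum>m\<in>Poly_Mapping.keys p. emb (Poly_Mapping.lookup p m) * of_nat (monomial_choose m e) * t_var ^ weight w m)"
proof -
  have "t_var ^ weight w e * Poly_Mapping.lookup (shift_scalar w p) e =
      (\<Sum>m\<in>Poly_Mapping.keys p. emb (Poly_Mapping.lookup p m) *
        (t_var ^ weight w e * Poly_Mapping.lookup (\<Prod>i\<in>UNIV. (mvar i + mconst (t_var ^ w i)) ^ Poly_Mapping.lookup m i) e))"
    unfolding shift_scalar_def lookup_sum lookup_mconst_mult sum_distrib_left
    by (rule sum.cong[OF refl]) (rule mult.left_commute)
  also have "\<dots> = (\<Sum>m\<in>Poly_Mapping.keys p. emb (Poly_Mapping.lookup p m) * of_nat (monomial_choose m e) * t_var ^ weight w m)"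
    by (rule sum.cong[OF refl]) (simp only: t_var_power_lookup_shifted_monomial mult.assoc)
  finally show ?thesis .
qed

lemma finite_vsupp: "finite (vsupp (f :: ('k::finite, 'n, 'b::zero) vpoly))"
proof (rule finite_subset)
  show "vsupp f \<subseteq> (\<Union>j. Poly_Mapping.keys (f j))"
    by (auto simp: vsupp_def coefv_def fun_eq_iff in_keys_iff)
qed simp

lemma t_var_power_coefv_shift_poly:
  fixes f :: "('k::finite, 'n::finite, 'a::field) vpoly"
  shows "t_var ^ weight w e * coefv (shift_poly w f) e j =
    (\<Sum>m\<in>vsupp f. emb (coefv f m j) * of_nat (monomial_choose m e) * t_var ^ weight w m)"
proof -
  have "Poly_Mapping.keys (f j) \<subseteq> vsupp f"
    by (auto simp: vsupp_def coefv_def fun_eq_iff in_keys_iff)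
  then show ?thesis
    unfolding coefv_def shift_poly_def t_var_power_lookup_shift_scalar
    by (intro sum.mono_neutral_left finite_vsupp) (auto simp: in_keys_iff)
qed

definition isolating_expansion ::
    "('k, 'n::finite, 'a::field) vpoly \<Rightarrow> ('n \<Rightarrow> nat) \<Rightarrow> ('n \<Rightarrow>\<^sub>0 nat) set
      \<Rightarrow> (('n \<Rightarrow>\<^sub>0 nat) \<Rightarrow> ('n \<Rightarrow>\<^sub>0 nat) \<Rightarrow> 'a) \<Rightarrow> bool" where
  "isolating_expansion f w B \<alpha> \<longleftrightarrow>
    (\<forall>m\<in>vsupp f. \<forall>j. coefv f m j = (\<Sum>b\<in>B. \<alpha> m b * coefv f b j)) \<and>
    (\<forall>m b. \<alpha> m b \<noteq> 0 \<longrightarrow> b \<in> B \<and> (b = m \<or> weight w b < weight w m)) \<and>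
    (\<forall>b\<in>B. \<alpha> b b = 1)"

text \<open>The polynomial \<open>q\<^sub>e\<^sub>b\<close> of the proof idea: given \<open>c\<^sub>m = \<Sum>\<^sub>b\<^sub>\<in>\<^sub>B \<alpha> m b c\<^sub>b\<close>, the coefficient of
  \<open>x\<^sup>e\<close> in \<open>f(x + t\<^sup>w)\<close> is \<open>\<Sum>\<^sub>b\<^sub>\<in>\<^sub>B t^(w(b) - w(e)) q\<^sub>e\<^sub>b(t) c\<^sub>b\<close>.\<close>
definition shift_transition ::
    "(('n::finite \<Rightarrow>\<^sub>0 nat) \<Rightarrow> ('n \<Rightarrow>\<^sub>0 nat) \<Rightarrow> 'a::comm_semiring_1) \<Rightarrow> ('n \<Rightarrow>\<^sub>0 nat) set \<Rightarrow> ('n \<Rightarrow> nat)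
      \<Rightarrow> ('n \<Rightarrow>\<^sub>0 nat) \<Rightarrow> ('n \<Rightarrow>\<^sub>0 nat) \<Rightarrow> 'a poly" where
  "shift_transition \<alpha> V w e b =
    (\<Sum>m\<in>V. monom (\<alpha> m b * of_nat (monomial_choose m e)) (weight w m - weight w b))"

lemma t_var_power_coefv_shift_poly_transition:
  fixes f :: "('k::finite, 'n::finite, 'a::field) vpoly"
  assumes "isolating_expansion f w B \<alpha>"
  shows "t_var ^ weight w e * coefv (shift_poly w f) e j =
    (\<Sum>b\<in>B. to_fract (shift_transition \<alpha> (vsupp f) w e b) * (t_var ^ weight w b * emb (coefv f b j)))"
proof -
  have expand: "coefv f m j = (\<Sum>b\<in>B. \<alpha> m b * coefv f b j)" if "m \<in> vsupp f" for m j
    using assms that by (simp add: isolating_expansion_def)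
  have lower: "weight w b \<le> weight w m" if "\<alpha> m b \<noteq> 0" for m b
    using assms that by (force simp: isolating_expansion_def)
  have lift: "to_fract (shift_transition \<alpha> (vsupp f) w e b) * t_var ^ weight w b =
      (\<Sum>m\<in>vsupp f. emb (\<alpha> m b) * of_nat (monomial_choose m e) * t_var ^ weight w m)" for b
  proof -
    have "to_fract (monom (\<alpha> m b * of_nat (monomial_choose m e)) (weight w m - weight w b)) * t_var ^ weight w b
        = emb (\<alpha> m b) * of_nat (monomial_choose m e) * t_var ^ weight w m" for m
    proof (cases "\<alpha> m b = 0")
      case False
      then show ?thesis
        using lower by (simp add: to_fract_monom emb_mult emb_of_nat mult.assoc flip: power_add)
    qed (simp add: to_fract_monom)
    then show ?thesis
      by (simp add: shift_transition_def sum_distrib_right)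
  qed
  have "t_var ^ weight w e * coefv (shift_poly w f) e j =
      (\<Sum>m\<in>vsupp f. \<Sum>b\<in>B. emb (\<alpha> m b) * of_nat (monomial_choose m e) * t_var ^ weight w m * emb (coefv f b j))"
    unfolding t_var_power_coefv_shift_poly
    by (intro sum.cong refl) (simp add: expand emb_sum emb_mult sum_distrib_left sum_distrib_right mult_ac)
  also have "\<dots> = (\<Sum>b\<in>B. to_fract (shift_transition \<alpha> (vsupp f) w e b) * t_var ^ weight w b * emb (coefv f b j))"
    unfolding lift sum_distrib_right by (rule sum.swap)
  finally show ?thesis
    by (simp only: mult.assoc)
qed

lemma coeff_0_shift_transition:
  fixes f :: "('k::finite, 'n::finite, 'a::field) vpoly"
  assumes "B \<subseteq> vsupp f" "isolating_expansion f w B \<alpha>"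
  shows "coeff (shift_transition \<alpha> (vsupp f) w e b) 0 = choose_row B e b"
proof -
  have lower: "b \<in> B \<and> (b = m \<or> weight w b < weight w m)" if "\<alpha> m b \<noteq> 0" for m b
    using assms(2) that by (simp add: isolating_expansion_def)
  have diag: "\<alpha> b b = 1" if "b \<in> B" for b
    using assms(2) that by (simp add: isolating_expansion_def)
  have "coeff (shift_transition \<alpha> (vsupp f) w e b) 0 = (\<Sum>m\<in>vsupp f. if m = b then \<alpha> b b * of_nat (monomial_choose b e) else 0)"
    unfolding shift_transition_def coeff_sum coeff_monom
  proof (intro sum.cong refl)
    fix m
    show "(if weight w m - weight w b = 0 then \<alpha> m b * of_nat (monomial_choose m e) else 0) =
        (if m = b then \<alpha> b b * of_nat (monomial_choose b e) else 0)"
    proof (cases "m = b")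
      case False
      then have "\<alpha> m b = 0 \<or> weight w b < weight w m"
        using lower[of m b] by blast
      with False show ?thesis
        by auto
    qed simp
  qed
  also have "\<dots> = (if b \<in> vsupp f then \<alpha> b b * of_nat (monomial_choose b e) else 0)"
    using finite_vsupp by (rule sum.delta)
  also have "\<dots> = choose_row B e b"
    using assms(1) diag lower[of b b] by (cases "\<alpha> b b = 0") (auto simp: choose_row_def)
  finally show ?thesis .
qed

lemma shift_transition_eq_0:
  assumes "isolating_expansion f w B \<alpha>" "b \<notin> B"
  shows "shift_transition \<alpha> V w e b = 0"
  unfolding shift_transition_def
  by (rule sum.neutral) (use assms in \<open>auto simp: isolating_expansion_def\<close>)

lemma coef_basis_subset_vsupp:
  assumes "coef_basis f B"
  shows "B \<subseteq> vsupp f"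
proof
  fix b assume "b \<in> B"
  then have "coefv f b \<noteq> 0"
    using assms vs.dependent_zero[of "coefv f ` B"] by (force simp: coef_basis_def)
  then show "b \<in> vsupp f"
    by (simp add: vsupp_def zero_fun_def)
qed

lemma basis_isolating_imp_isolating_expansion:
  fixes f :: "('k::finite, 'n::finite, 'a::field) vpoly"
  assumes "basis_isolating w f"
  shows "\<exists>B \<alpha>. coef_basis f B \<and> B \<subseteq> vsupp f \<and> isolating_expansion f w B \<alpha>"
proof -
  obtain B where basis: "coef_basis f B" and isolating: "\<And>m. m \<in> vsupp f - B \<Longrightarrow>
      coefv f m \<in> vs.span (coefv f ` {b\<in>B. weight w b < weight w m})"
    using assms unfolding basis_isolating_def by blast
  have "B \<subseteq> vsupp f"
    using basis by (rule coef_basis_subset_vsupp)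
  then have "finite B"
    using finite_vsupp finite_subset by blast
  define triangular where "triangular m a \<longleftrightarrow>
      (m \<in> vsupp f \<longrightarrow> (\<forall>j. coefv f m j = (\<Sum>b\<in>B. a b * coefv f b j)))
      \<and> (\<forall>b. a b \<noteq> 0 \<longrightarrow> b \<in> B \<and> (b = m \<or> weight w b < weight w m)) \<and> (m \<in> B \<longrightarrow> a m = 1)"
    for m a
  have "\<exists>a. triangular m a" for m
  proof (cases "m \<in> vsupp f - B")
    case True
    let ?A = "{b\<in>B. weight w b < weight w m}"
    have "finite ?A" "inj_on (coefv f) ?A"
      using \<open>finite B\<close> basis by (auto simp: coef_basis_def intro: inj_on_subset)
    then obtain a where a: "\<And>j. coefv f m j = (\<Sum>b\<in>?A. a b * coefv f b j)" "\<And>b. a b \<noteq> 0 \<Longrightarrow> b \<in> ?A"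
      using isolating[OF True] by (rule in_span_imageE) blast
    have "(\<Sum>b\<in>?A. a b * coefv f b j) = (\<Sum>b\<in>B. a b * coefv f b j)" for j
      using \<open>finite B\<close> a(2) by (intro sum.mono_neutral_left) auto
    with a True have "triangular m a"
      by (auto simp: triangular_def)
    then show ?thesis by blast
  next
    case False
    then have "triangular m (\<lambda>b. of_bool (b = m \<and> m \<in> B))"
      using \<open>finite B\<close> by (auto simp: triangular_def if_distrib cong: if_cong)
    then show ?thesis by blast
  qed
  then obtain \<alpha> where "triangular m (\<alpha> m)" for m
    by metis
  then have "isolating_expansion f w B \<alpha>"
    by (auto simp: isolating_expansion_def triangular_def)
  with basis \<open>B \<subseteq> vsupp f\<close> show ?thesis
    by blast
qed

lemma coef_basis_if_independent_in_span:
  fixes g :: "('k, 'n, 'b::field) vpoly" and d :: "'y \<Rightarrow> 'k \<Rightarrow> 'b"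
  assumes "finite B" "linearly_independent_on B d"
    and "finite E" "card E = card B" "linearly_independent_on E (coefv g)"
    and in_span: "\<And>e. coefv g e \<in> vs.span (d ` B)"
  shows "coef_basis g E"
proof -
  have inj_d: "inj_on d B" and indep_d: "\<not> vs.dependent (d ` B)"
    using assms(1,2) by (simp_all add: linearly_independent_on_iff)
  have inj: "inj_on (coefv g) E" and indep: "\<not> vs.dependent (coefv g ` E)"
    using assms(3,5) by (simp_all add: linearly_independent_on_iff)
  have span_eq: "vs.span (coefv g ` E) = vs.span (d ` B)"
    using assms(1,4) in_span inj inj_d indep indep_d
    by (intro vs.span_eq_if_independent_card_eq) (auto simp: card_image)
  have "lrsp g = vs.span (d ` B)"
  proof
    show "lrsp g \<subseteq> vs.span (d ` B)"
      unfolding lrsp_def using in_span by (intro vs.span_minimal vs.subspace_span) auto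
    show "vs.span (d ` B) \<subseteq> lrsp g"
      unfolding lrsp_def span_eq[symmetric] by (intro vs.span_mono) auto
  qed
  with inj indep span_eq show ?thesis
    by (simp add: coef_basis_def)
qed

lemma coef_basis_shift_poly:
  fixes f :: "('k::finite, 'n::finite, 'a::field_char_0) vpoly"
  assumes basis: "coef_basis f B" and "B \<subseteq> vsupp f" and expansion: "isolating_expansion f w B \<alpha>"
    and "finite E" "card E = card B" and rows: "linearly_independent_on E (choose_row B :: _ \<Rightarrow> _ \<Rightarrow> 'a)"
  shows "coef_basis (shift_poly w f) E"
proof -
  let ?q = "shift_transition \<alpha> (vsupp f) w"
  define d where "d b j = t_var ^ weight w b * emb (coefv f b j)" for b j
  have "finite B"
    using \<open>B \<subseteq> vsupp f\<close> finite_vsupp finite_subset by blast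
  have shift: "t_var ^ weight w e * coefv (shift_poly w f) e j = (\<Sum>b\<in>B. to_fract (?q e b) * d b j)" for e j
    unfolding d_def using expansion by (rule t_var_power_coefv_shift_poly_transition)
  have "linearly_independent_on B (coefv f)"
    using basis \<open>finite B\<close> by (simp add: coef_basis_def linearly_independent_on_iff)
  then have "linearly_independent_on B d"
    unfolding d_def using linearly_independent_on_emb[OF \<open>finite B\<close>]
    by (subst linearly_independent_on_scale_iff) (simp_all add: t_var_nonzero)
  moreover have "linearly_independent_on E (\<lambda>e b. to_fract (?q e b))"
  proof (intro linearly_independent_on_to_fract linearly_independent_on_poly_if_constant_terms)
    show "linearly_independent_on E (\<lambda>e b. coeff (?q e b) 0)"
      using rows by (simp add: coeff_0_shift_transition[OF \<open>B \<subseteq> vsupp f\<close> expansion])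
  qed (fact \<open>finite E\<close>)
  ultimately have "linearly_independent_on E (\<lambda>e j. t_var ^ weight w e * coefv (shift_poly w f) e j)"
    by (rule linearly_independent_on_combination) (simp_all add: shift_transition_eq_0[OF expansion] shift)
  then have "linearly_independent_on E (coefv (shift_poly w f))"
    by (simp add: linearly_independent_on_scale_iff t_var_nonzero)
  moreover have "coefv (shift_poly w f) e \<in> vs.span (d ` B)" for e
    by (rule in_span_if_scaled_combination[OF _ shift]) (simp add: t_var_nonzero)
  ultimately show ?thesis
    using \<open>finite B\<close> \<open>linearly_independent_on B d\<close> \<open>finite E\<close> \<open>card E = card B\<close>
    by (intro coef_basis_if_independent_in_span)
qed

theorem theorem5:
  fixes f :: "('k::finite, 'n::finite, 'a::field_char_0) vpoly"
    and w :: "'n \<Rightarrow> nat"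
  assumes "basis_isolating w f"
  shows "has_cone_closed_basis (shift_poly w f)"
proof -
  obtain B \<alpha> where "coef_basis f B" "B \<subseteq> vsupp f" "isolating_expansion f w B \<alpha>"
    using basis_isolating_imp_isolating_expansion[OF assms] by blast
  then have "finite B"
    using finite_vsupp finite_subset by blast
  obtain E where "cone_closed E" "finite E" "card E = card B"
    and "linearly_independent_on E (choose_row B :: _ \<Rightarrow> _ \<Rightarrow> 'a)"
    using \<open>finite B\<close> by (rule cone_closed_choose_row_basis) blast
  with \<open>coef_basis f B\<close> \<open>B \<subseteq> vsupp f\<close> \<open>isolating_expansion f w B \<alpha>\<close> show ?thesis
    unfolding has_cone_closed_basis_def by (blast intro: coef_basis_shift_poly)
qed

end
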